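(* Let $K$ be a field of characteristic not equal to $3$, and let $\phi(z)\in K[z]$ be a cubic polynomial. Then there is a degree one polynomial $\eta\in K[z]$ such that $\psi=\eta^{-1}\circ\phi\circ\eta$ is in normal form. Moreover, if another degree one polynomial $\tilde{\eta}\in K[z]$ also gives a normal form $\tilde{\psi}=\tilde{\eta}^{-1}\circ\phi\circ\tilde{\eta}$, then either $\tilde{\eta}=\eta$ and $\tilde{\psi}=\psi$, or else both normal forms $\psi(z)=az^3+bz$ and $\tilde{\psi}(z)=\tilde{a}z^3+bz$ are of the form $az^3+bz$ with the same linear coefficient $b$, and the quotient $\tilde{a}/a$ of their lead coefficients is the square of an element of $K$.
   Context: A cubic polynomial $\phi\in K[z]$ is said to be in normal form if either $\phi(z)=az^3+bz+1$ or $\phi(z)=az^3+bz$ for some $a,b\in K$ (with $a\neq0$). *)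

theory Defs
  imports "HOL-Computational_Algebra.Polynomial"
begin

definition lin_inv :: "'a::field poly \<Rightarrow> 'a poly" where
  "lin_inv eta = [: - coeff eta 0 / coeff eta 1, 1 / coeff eta 1 :]"

definition conj_poly :: "'a::field poly \<Rightarrow> 'a poly \<Rightarrow> 'a poly" where
  "conj_poly phi eta = pcompose (lin_inv eta) (pcompose phi eta)"

definition normal_form :: "'a::field poly \<Rightarrow> bool" where
  "normal_form psi \<longleftrightarrow> (\<exists>a b. a \<noteq> 0 \<and> (psi = [:1, b, 0, a:] \<or> psi = [:0, b, 0, a:]))"

end

theory Submission
  imports Defs "HOL-Computational_Algebra.Primes"
begin

text \<open>Conjugating by eta(z) = c z + d, the translation d is forced by killing the quadratic
  coefficient, which needs 3 p3 invertible, i.e. char K \<noteq> 3. The constant term of the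
  conjugate is then (phi(d) - d)/c: if d is not a fixed point of phi the scaling c must equal
  phi(d) - d to make it 1, while if d is fixed every c works, and changing c only multiplies the
  leading coefficient by c^2.\<close>

lemma three_neq_zero_if_CHAR_neq_3:
  assumes "CHAR('a::semiring_1) \<noteq> 3"
  shows "(3::'a) \<noteq> 0"
proof
  assume "(3::'a) = 0"
  then have "CHAR('a) dvd 3"
    using of_nat_eq_0_iff_char_dvd[where 'a='a, of 3] by simp
  then have "CHAR('a) = 1 \<or> CHAR('a) = 3"
    using prime_nat_iff[of 3] by auto
  with assms show False
    using CHAR_not_1[where 'a='a] by simp
qed

lemma degree_eq_1_iff:
  "degree (p::'a::zero poly) = 1 \<longleftrightarrow> (\<exists>d c. c \<noteq> 0 \<and> p = [:d, c:])"
proof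
  assume deg: "degree p = 1"
  have "p = [:coeff p 0, coeff p 1:]"
  proof (rule poly_eqI)
    fix n show "coeff p n = coeff [:coeff p 0, coeff p 1:] n"
      using deg by (cases n; cases "n - 1") (auto simp: coeff_eq_0 coeff_pCons split: nat.splits)
  qed
  moreover have "coeff p 1 \<noteq> 0"
    using deg leading_coeff_0_iff[of p] by fastforce
  ultimately show "\<exists>d c. c \<noteq> 0 \<and> p = [:d, c:]" by blast
qed auto

lemma degree_eq_3_iff:
  "degree (p::'a::zero poly) = 3 \<longleftrightarrow>
     (\<exists>p0 p1 p2 p3. p3 \<noteq> 0 \<and> p = [:p0, p1, p2, p3:])"
proof
  assume deg: "degree p = 3"
  have "p = [:coeff p 0, coeff p 1, coeff p 2, coeff p 3:]"
  proof (rule poly_eqI)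
    fix n show "coeff p n = coeff [:coeff p 0, coeff p 1, coeff p 2, coeff p 3:] n"
      using deg
      by (cases n; cases "n - 1"; cases "n - 2"; cases "n - 3")
        (auto simp: coeff_eq_0 coeff_pCons numeral_2_eq_2 numeral_3_eq_3 split: nat.splits)
  qed
  moreover have "coeff p 3 \<noteq> 0"
    using deg leading_coeff_0_iff[of p] by fastforce
  ultimately show "\<exists>p0 p1 p2 p3. p3 \<noteq> 0 \<and> p = [:p0, p1, p2, p3:]" by blast
qed auto

lemma conj_poly_cubic_linear:
  fixes p0 p1 p2 p3 d c :: "'a::field"
  assumes "c \<noteq> 0"
  shows "conj_poly [:p0, p1, p2, p3:] [:d, c:] =
     [:(poly [:p0, p1, p2, p3:] d - d) / c, p1 + 2*p2*d + 3*p3*d^2, (p2 + 3*p3*d) * c, p3 * c^2:]"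
  using assms
  by (simp add: conj_poly_def lin_inv_def pcompose_pCons algebra_simps field_simps
      power2_eq_square power3_eq_cube numeral_3_eq_3 numeral_2_eq_2)

lemma normal_form_cubic_iff:
  "normal_form [:q0, q1, q2, q3:] \<longleftrightarrow> q3 \<noteq> 0 \<and> q2 = 0 \<and> (q0 = 0 \<or> q0 = 1)"
  unfolding normal_form_def by auto

lemma normal_form_conj_poly_cubic_iff:
  fixes phi :: "'a::field poly"
  assumes "(3::'a) \<noteq> 0" and "p3 \<noteq> 0" and "c \<noteq> 0"
    and phi: "phi = [:p0, p1, p2, p3:]"
  shows "normal_form (conj_poly phi [:d, c:]) \<longleftrightarrow>
           d = - p2 / (3 * p3) \<and> (poly phi d = d \<or> c = poly phi d - d)"
proof -
  have conj: "conj_poly phi [:d, c:] =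
      [:(poly phi d - d) / c, p1 + 2*p2*d + 3*p3*d^2, (p2 + 3*p3*d) * c, p3 * c^2:]"
    unfolding phi using assms(3) by (rule conj_poly_cubic_linear)
  have translation: "p2 + 3*p3*d = 0 \<longleftrightarrow> d = - p2 / (3 * p3)"
    using assms(1,2) by (auto simp: field_simps) (metis add.commute add_eq_0_iff2)
  have constant_0: "(poly phi d - d) / c = 0 \<longleftrightarrow> poly phi d = d"
    using assms(3) by simp
  have constant_1: "(poly phi d - d) / c = 1 \<longleftrightarrow> c = poly phi d - d"
    using assms(3) by (auto simp: field_simps)
  show ?thesis
    using assms(2,3)
    by (simp add: conj normal_form_cubic_iff translation constant_0 constant_1) blast
qed

theorem proposition4p2:
  fixes phi :: "'a::field poly"
  assumes "CHAR('a) \<noteq> 3"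
    and "degree phi = 3"
  shows "\<exists>eta. degree eta = 1 \<and> normal_form (conj_poly phi eta) \<and>
           (\<forall>eta'. degree eta' = 1 \<and> normal_form (conj_poly phi eta') \<longrightarrow>
              (eta' = eta \<and> conj_poly phi eta' = conj_poly phi eta) \<or>
              (\<exists>a a' b. a \<noteq> 0 \<and> a' \<noteq> 0 \<and>
                 conj_poly phi eta = [:0, b, 0, a:] \<and>
                 conj_poly phi eta' = [:0, b, 0, a':] \<and>
                 (\<exists>c. a' / a = c ^ 2)))"
proof -
  have three: "(3::'a) \<noteq> 0"
    using assms(1) by (rule three_neq_zero_if_CHAR_neq_3)
  obtain p0 p1 p2 p3 where p3: "p3 \<noteq> 0" and phi: "phi = [:p0, p1, p2, p3:]"
    using assms(2) degree_eq_3_iff by blast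
  define d0 where "d0 = - p2 / (3 * p3)"
  define e where "e = poly phi d0 - d0"
  have vertex: "p2 + 3*p3*d0 = 0"
    using three p3 by (simp add: d0_def field_simps)
  define b where "b = p1 + 2*p2*d0 + 3*p3*d0^2"
  define eta where "eta = [:d0, if e = 0 then 1 else e:]"
  have conj_translate: "conj_poly phi [:d0, c:] = [:e / c, b, 0, p3 * c^2:]"
    if "c \<noteq> 0" for c
    using conj_poly_cubic_linear[OF that, of p0 p1 p2 p3 d0] vertex
    unfolding phi[symmetric] e_def b_def by simp
  have normal_form_iff: "normal_form (conj_poly phi [:d, c:]) \<longleftrightarrow> d = d0 \<and> (e = 0 \<or> c = e)"
    if "c \<noteq> 0" for d c
    using normal_form_conj_poly_cubic_iff[OF three p3 that phi] unfolding d0_def[symmetric]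
    by (cases "d = d0") (simp_all add: e_def)
  show ?thesis
  proof (intro exI conjI allI impI)
    show "degree eta = 1"
      by (simp add: eta_def)
    show "normal_form (conj_poly phi eta)"
      unfolding eta_def by (subst normal_form_iff) auto
    fix eta' assume eta': "degree eta' = 1 \<and> normal_form (conj_poly phi eta')"
    then obtain c where c: "c \<noteq> 0" and "eta' = [:d0, c:]" and "e = 0 \<or> c = e"
      using degree_eq_1_iff normal_form_iff by metis
    then consider "eta' = eta" | "e = 0"
      by (auto simp: eta_def)
    then show "(eta' = eta \<and> conj_poly phi eta' = conj_poly phi eta) \<or>
              (\<exists>a a' b. a \<noteq> 0 \<and> a' \<noteq> 0 \<and>
                 conj_poly phi eta = [:0, b, 0, a:] \<and>
                 conj_poly phi eta' = [:0, b, 0, a':] \<and>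
                 (\<exists>c. a' / a = c ^ 2))"
    proof cases
      case 2
      have "conj_poly phi eta = [:0, b, 0, p3:]" and "conj_poly phi eta' = [:0, b, 0, p3 * c^2:]"
        using 2 c \<open>eta' = [:d0, c:]\<close> by (simp_all add: eta_def conj_translate)
      then show ?thesis
        using p3 c by (intro disjI2 exI[of _ p3] exI[of _ "p3 * c^2"] exI[of _ b]) auto
    qed simp
  qed
qed
end
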